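(* Let $n=1$, $r\in\{-1,+1\}$ and $\Phi(x,y)=r\phi(x-y)$. Let $f:\mathbb R\to\mathbb R$, $f(x)=\max_{i\in I}\Phi(x,y_i)-\beta_i$ for a finite nonempty index set $I$ and $y_i,\beta_i\in\mathbb R$. Then $f$ is a-strongly convex if $r=+1$, and a-weakly convex if $r=-1$.
   Context: Standing assumption (here with $n=1$): $\phi:\mathbb R\to\mathbb R$ is convex, finite-valued, differentiable and strictly convex, super-coercive; $\phi^*$ has the same properties and $(\phi^* )'=(\phi')^{-1}$. $\partial f$ is the limiting subdifferential. A proper lsc $f$ is a-weakly convex if for every $(\bar x,\bar v)\in\operatorname{graph}\partial f$, $f(x)\ge f(\bar x)-\phi(x-\bar x+(\phi^* )'(-\bar v))+\phi((\phi^* )'(-\bar v))$ for all $x$; a-strongly convex if $f(x)\ge f(\bar x)+\phi(x-\bar x+(\phi^* )'(\bar v))-\phi((\phi^* )'(\bar v))$ for all $x$. *)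

theory Defs
  imports "HOL-Analysis.Analysis"
begin

definition conj_fun :: "(real \<Rightarrow> real) \<Rightarrow> real \<Rightarrow> real" where
  "conj_fun \<phi> s = (SUP x. s * x - \<phi> x)"

definition super_coercive :: "(real \<Rightarrow> real) \<Rightarrow> bool" where
  "super_coercive \<phi> \<longleftrightarrow> filterlim (\<lambda>x. \<phi> x / \<bar>x\<bar>) at_top at_infinity"

definition strictly_convex :: "(real \<Rightarrow> real) \<Rightarrow> bool" where
  "strictly_convex \<phi> \<longleftrightarrow>
     (\<forall>x y t. x \<noteq> y \<and> 0 < t \<and> t < 1 \<longrightarrow>
        \<phi> ((1 - t) * x + t * y) < (1 - t) * \<phi> x + t * \<phi> y)"

definition standing_phi :: "(real \<Rightarrow> real) \<Rightarrow> bool" where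
  "standing_phi \<phi> \<longleftrightarrow>
     convex_on UNIV \<phi> \<and> (\<forall>x. \<phi> differentiable at x) \<and> strictly_convex \<phi> \<and> super_coercive \<phi> \<and>
     convex_on UNIV (conj_fun \<phi>) \<and> (\<forall>x. conj_fun \<phi> differentiable at x) \<and>
     strictly_convex (conj_fun \<phi>) \<and> super_coercive (conj_fun \<phi>) \<and>
     deriv (conj_fun \<phi>) = inv (deriv \<phi>)"

definition frechet_subdiff :: "(real \<Rightarrow> real) \<Rightarrow> real \<Rightarrow> real set" where
  "frechet_subdiff f x = {v. \<forall>e>0. \<exists>d>0. \<forall>y. \<bar>y - x\<bar> < d \<longrightarrow>
        f y \<ge> f x + v * (y - x) - e * \<bar>y - x\<bar>}"

definition lim_subdiff :: "(real \<Rightarrow> real) \<Rightarrow> real \<Rightarrow> real set" where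
  "lim_subdiff f x = {v. \<exists>xs vs. xs \<longlonglongrightarrow> x \<and> (\<lambda>k. f (xs k)) \<longlonglongrightarrow> f x \<and>
        vs \<longlonglongrightarrow> v \<and> (\<forall>k. vs k \<in> frechet_subdiff f (xs k))}"

definition lsc :: "(real \<Rightarrow> real) \<Rightarrow> bool" where
  "lsc f \<longleftrightarrow> (\<forall>x. \<forall>e>0. \<forall>\<^sub>F y in at x. f x - e < f y)"

definition a_weakly_convex :: "(real \<Rightarrow> real) \<Rightarrow> (real \<Rightarrow> real) \<Rightarrow> bool" where
  "a_weakly_convex \<phi> f \<longleftrightarrow> lsc f \<and>
     (\<forall>xb vb. vb \<in> lim_subdiff f xb \<longrightarrow>
        (\<forall>x. f x \<ge> f xb - \<phi> (x - xb + deriv (conj_fun \<phi>) (- vb))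
                   + \<phi> (deriv (conj_fun \<phi>) (- vb))))"

definition a_strongly_convex :: "(real \<Rightarrow> real) \<Rightarrow> (real \<Rightarrow> real) \<Rightarrow> bool" where
  "a_strongly_convex \<phi> f \<longleftrightarrow> lsc f \<and>
     (\<forall>xb vb. vb \<in> lim_subdiff f xb \<longrightarrow>
        (\<forall>x. f x \<ge> f xb + \<phi> (x - xb + deriv (conj_fun \<phi>) vb)
                   - \<phi> (deriv (conj_fun \<phi>) vb)))"

end

theory Submission
  imports Defs
begin

text \<open>
  Let \<open>v\<close> be a Frechet subgradient of \<open>f\<close> at \<open>x\<close>. Comparing one-sided difference quotients, some
  active piece has \<open>r \<phi>'(x - y\<^sub>i) \<ge> v\<close> and some active piece has \<open>r \<phi>'(x - y\<^sub>j) \<le> v\<close>, so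
  \<open>u = (\<phi>')\<^sup>-\<^sup>1(r v)\<close> lies between two active shifts \<open>x - y\<^sub>i\<close>. Since the increments
  \<open>\<phi>(\<cdot> + h) - \<phi>(\<cdot>)\<close> of the convex \<open>\<phi>\<close> increase, the active piece on the appropriate side of \<open>u\<close>
  yields \<open>f z - f x \<ge> r (\<phi>(z - x + u) - \<phi>(u))\<close>. This inequality passes to limiting subgradients
  because \<open>(\<phi>\<^sup>*)' = (\<phi>')\<^sup>-\<^sup>1\<close> is monotone and onto, hence continuous.
\<close>

lemma convex_slope_between_derivs:
  fixes g g' :: "real \<Rightarrow> real"
  assumes cv: "convex_on UNIV g" and d: "\<And>x. (g has_real_derivative g' x) (at x)" and ab: "a < b"
  shows "g' a \<le> (g b - g a) / (b - a)" and "(g b - g a) / (b - a) \<le> g' b"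
proof -
  have "((\<lambda>t. (g t - g a) / (t - a)) \<longlongrightarrow> g' a) (at_right a)"
    using d[of a] unfolding has_field_derivative_iff by (rule tendsto_mono[OF at_le, rotated]) auto
  moreover have "\<forall>\<^sub>F t in at_right a. (g t - g a) / (t - a) \<le> (g b - g a) / (b - a)"
    unfolding eventually_at_right_field
  proof (intro exI[of _ b] conjI allI impI)
    fix t assume "a < t" "t < b"
    from convex_on_slope_le(1)[OF cv UNIV_I UNIV_I this]
    show "(g t - g a) / (t - a) \<le> (g b - g a) / (b - a)"
      by (metis minus_diff_eq minus_divide_divide)
  qed (rule ab)
  ultimately show "g' a \<le> (g b - g a) / (b - a)"
    by (simp add: tendsto_upperbound)
  have "((\<lambda>t. (g t - g b) / (t - b)) \<longlongrightarrow> g' b) (at_left b)"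
    using d[of b] unfolding has_field_derivative_iff by (rule tendsto_mono[OF at_le, rotated]) auto
  moreover have "\<forall>\<^sub>F t in at_left b. (g b - g a) / (b - a) \<le> (g t - g b) / (t - b)"
    unfolding eventually_at_left_field
  proof (intro exI[of _ a] conjI allI impI)
    fix t assume "a < t" "t < b"
    from convex_on_slope_le(2)[OF cv UNIV_I UNIV_I this]
    show "(g b - g a) / (b - a) \<le> (g t - g b) / (t - b)"
      by (metis minus_diff_eq minus_divide_divide)
  qed (rule ab)
  ultimately show "(g b - g a) / (b - a) \<le> g' b"
    by (simp add: tendsto_lowerbound)
qed

lemma convex_deriv_mono:
  fixes g g' :: "real \<Rightarrow> real"
  assumes "convex_on UNIV g" and "\<And>x. (g has_real_derivative g' x) (at x)"
  shows "mono g'"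
proof (rule monoI)
  fix a b :: real assume "a \<le> b"
  then show "g' a \<le> g' b"
    using convex_slope_between_derivs[OF assms, of a b] by (cases "a = b") auto
qed

lemma strictly_convex_deriv_strict_mono:
  fixes g g' :: "real \<Rightarrow> real"
  assumes cv: "convex_on UNIV g" and d: "\<And>x. (g has_real_derivative g' x) (at x)"
    and sc: "strictly_convex g"
  shows "strict_mono g'"
proof (rule strict_monoI)
  fix a b :: real assume ab: "a < b"
  define m where "m = (a + b) / 2"
  have m: "a < m" "m < b" "m - a = (b - a) / 2" "b - m = (b - a) / 2"
    using ab unfolding m_def by (auto simp: field_simps)
  have "g m < (g a + g b) / 2"
    using sc[unfolded strictly_convex_def, rule_format, of a b "1/2"] ab
    by (simp add: m_def field_simps)
  then have "(g m - g a) / (m - a) < (g b - g m) / (b - m)"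
    using ab by (simp add: m(3,4) divide_strict_right_mono)
  then show "g' a < g' b"
    using convex_slope_between_derivs(1)[OF cv d m(1)] convex_slope_between_derivs(2)[OF cv d m(2)] by linarith
qed

lemma convex_increment_mono:
  fixes g g' :: "real \<Rightarrow> real"
  assumes cv: "convex_on UNIV g" and d: "\<And>x. (g has_real_derivative g' x) (at x)"
    and "0 \<le> h" and "a \<le> b"
  shows "g (a + h) - g a \<le> g (b + h) - g b"
proof -
  have "mono g'" using convex_deriv_mono[OF cv d] .
  have "((\<lambda>s. g (s + h) - g s) has_real_derivative g' (x + h) - g' x) (at x)" for x
    by (rule derivative_eq_intros DERIV_chain2[OF d] d refl | simp)+
  moreover have "0 \<le> g' (x + h) - g' x" for x
    using \<open>mono g'\<close> \<open>0 \<le> h\<close> by (simp add: monoD)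
  ultimately show ?thesis
    using DERIV_nonneg_imp_nondecreasing[OF \<open>a \<le> b\<close>, of "\<lambda>s. g (s + h) - g s"] by blast
qed

lemma lsc_Max:
  fixes p :: "'i \<Rightarrow> real \<Rightarrow> real"
  assumes "finite I" "I \<noteq> {}" and cont: "\<And>i. continuous_on UNIV (p i)"
    and f: "\<And>x. f x = Max ((\<lambda>i. p i x) ` I)"
  shows "lsc f"
  unfolding lsc_def
proof (intro allI impI)
  fix x e :: real assume "e > 0"
  have "f x \<in> (\<lambda>i. p i x) ` I"
    using Max_in assms(1,2) f[of x] by simp
  then obtain i where i: "i \<in> I" "p i x = f x" by auto
  have "isCont (p i) x"
    using cont[of i] by (simp add: continuous_on_eq_continuous_at)
  then have "(p i \<longlongrightarrow> f x) (at x)"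
    using i(2) by (simp add: isCont_def)
  then have "\<forall>\<^sub>F t in at x. f x - e < p i t"
    using \<open>e > 0\<close> by (simp add: order_tendstoD(1))
  then show "\<forall>\<^sub>F t in at x. f x - e < f t"
  proof eventually_elim
    case (elim t)
    have "p i t \<le> f t"
      using Max_ge[of "(\<lambda>i. p i t) ` I" "p i t"] assms(1) i(1) f[of t] by simp
    with elim show ?case by simp
  qed
qed

lemma frechet_subdiff_right_slope:
  assumes "v \<in> frechet_subdiff f x" and "c < v"
  shows "\<forall>\<^sub>F t in at_right x. c \<le> (f t - f x) / (t - x)"
proof -
  have "v - c > 0" using \<open>c < v\<close> by simp
  with assms(1) obtain d where "d > 0"
    and d: "\<And>t. \<bar>t - x\<bar> < d \<Longrightarrow> f x + v * (t - x) - (v - c) * \<bar>t - x\<bar> \<le> f t"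
    unfolding frechet_subdiff_def by blast
  have "\<forall>\<^sub>F t in at_right x. x < t \<and> t < x + d"
    unfolding eventually_at_right_field using \<open>d > 0\<close> by (intro exI[of _ "x + d"]) auto
  then show ?thesis
  proof eventually_elim
    case (elim t)
    then have "c * (t - x) \<le> f t - f x"
      using d[of t] by (simp add: algebra_simps)
    with elim show ?case by (simp add: pos_le_divide_eq)
  qed
qed

lemma Max_right_slope_less:
  fixes p p' :: "'i \<Rightarrow> real \<Rightarrow> real"
  assumes fin: "finite I" "I \<noteq> {}" and d: "\<And>i x. (p i has_real_derivative p' i x) (at x)"
    and f: "\<And>x. f x = Max ((\<lambda>i. p i x) ` I)"
    and less: "\<And>i. i \<in> I \<Longrightarrow> p i x = f x \<Longrightarrow> p' i x < c"
  shows "\<forall>\<^sub>F t in at_right x. (f t - f x) / (t - x) < c"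
proof -
  have right: "\<forall>\<^sub>F t in at_right x. x < t"
    unfolding eventually_at_right_field by (intro exI[of _ "x + 1"]) auto
  have "\<forall>\<^sub>F t in at_right x. p i t < f x + c * (t - x)" if i: "i \<in> I" for i
  proof (cases "p i x = f x")
    case True
    have "((\<lambda>t. (p i t - p i x) / (t - x)) \<longlongrightarrow> p' i x) (at_right x)"
      using d unfolding has_field_derivative_iff by (rule tendsto_mono[OF at_le, rotated]) auto
    then have "\<forall>\<^sub>F t in at_right x. (p i t - p i x) / (t - x) < c"
      using less[OF i True] by (rule order_tendstoD(2))
    with right show ?thesis
      by eventually_elim (simp add: True pos_divide_less_eq algebra_simps)
  next
    case False
    have "p i x \<le> f x"
      using Max_ge[of "(\<lambda>i. p i x) ` I" "p i x"] fin i f[of x] by simp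
    with False have "p i x < f x" by simp
    moreover have "((\<lambda>t. p i t - c * (t - x)) \<longlongrightarrow> p i x - c * (x - x)) (at_right x)"
      by (intro tendsto_intros tendsto_mono[OF at_le isCont_tendsto_compose[OF DERIV_isCont[OF d]]]) auto
    ultimately have "\<forall>\<^sub>F t in at_right x. p i t - c * (t - x) < f x"
      by (simp add: order_tendstoD(2))
    then show ?thesis by eventually_elim simp
  qed
  then have "\<forall>\<^sub>F t in at_right x. \<forall>i\<in>I. p i t < f x + c * (t - x)"
    by (intro eventually_ball_finite[OF fin(1)] ballI)
  with right show ?thesis
  proof eventually_elim
    case (elim t)
    have "f t \<in> (\<lambda>i. p i t) ` I"
      using f[of t] Max_in fin by simp
    with elim have "f t < f x + c * (t - x)" by auto
    with elim show ?case by (simp add: pos_divide_less_eq algebra_simps)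
  qed
qed

lemma frechet_subdiff_Max_le_active_deriv:
  fixes p p' :: "'i \<Rightarrow> real \<Rightarrow> real"
  assumes fin: "finite I" "I \<noteq> {}" and d: "\<And>i x. (p i has_real_derivative p' i x) (at x)"
    and f: "\<And>x. f x = Max ((\<lambda>i. p i x) ` I)" and v: "v \<in> frechet_subdiff f x"
  shows "\<exists>i\<in>I. p i x = f x \<and> v \<le> p' i x"
proof (rule ccontr)
  assume no_active: "\<not> ?thesis"
  define S where "S = insert (v - 1) ((\<lambda>i. p' i x) ` {i\<in>I. p i x = f x})"
  have "finite S" "S \<noteq> {}" and "\<forall>s\<in>S. s < v"
    using fin(1) no_active unfolding S_def by force+
  then have "Max S < v" by simp
  define c where "c = (Max S + v) / 2"
  have "c < v" using \<open>Max S < v\<close> unfolding c_def by simp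
  have "p' i x < c" if "i \<in> I" "p i x = f x" for i
    using Max_ge[OF \<open>finite S\<close>, of "p' i x"] \<open>Max S < v\<close> that unfolding S_def c_def by auto
  with Max_right_slope_less[OF fin d f]
  have "\<forall>\<^sub>F t in at_right x. (f t - f x) / (t - x) < c" by blast
  moreover have "\<forall>\<^sub>F t in at_right x. c \<le> (f t - f x) / (t - x)"
    using frechet_subdiff_right_slope[OF v \<open>c < v\<close>] .
  ultimately have "\<forall>\<^sub>F t in at_right x. False"
    by eventually_elim simp
  then show False by (simp add: trivial_limit_at_right_real)
qed

lemma frechet_subdiff_reflect:
  assumes "v \<in> frechet_subdiff f x"
  shows "- v \<in> frechet_subdiff (\<lambda>t. f (- t)) (- x)"
  unfolding frechet_subdiff_def
proof (intro CollectI allI impI)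
  fix e :: real assume "e > 0"
  with assms obtain d where "d > 0"
    and d: "\<And>t. \<bar>t - x\<bar> < d \<Longrightarrow> f x + v * (t - x) - e * \<bar>t - x\<bar> \<le> f t"
    unfolding frechet_subdiff_def by blast
  have "f (- (- x)) + (- v) * (t - (- x)) - e * \<bar>t - (- x)\<bar> \<le> f (- t)"
    if "\<bar>t - (- x)\<bar> < d" for t
    using d[of "- t"] that by (simp add: abs_minus_commute algebra_simps)
  with \<open>d > 0\<close> show "\<exists>d>0. \<forall>t. \<bar>t - (- x)\<bar> < d \<longrightarrow>
      f (- (- x)) + (- v) * (t - (- x)) - e * \<bar>t - (- x)\<bar> \<le> f (- t)" by blast
qed

lemma frechet_subdiff_Max_ge_active_deriv:
  fixes p p' :: "'i \<Rightarrow> real \<Rightarrow> real"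
  assumes fin: "finite I" "I \<noteq> {}" and d: "\<And>i x. (p i has_real_derivative p' i x) (at x)"
    and f: "\<And>x. f x = Max ((\<lambda>i. p i x) ` I)" and v: "v \<in> frechet_subdiff f x"
  shows "\<exists>i\<in>I. p i x = f x \<and> p' i x \<le> v"
proof -
  have "((\<lambda>t. p i (- t)) has_real_derivative - p' i (- t)) (at t)" for i t
    using DERIV_chain2[OF d DERIV_minus[OF DERIV_ident], of i t] by simp
  from frechet_subdiff_Max_le_active_deriv[OF fin this _ frechet_subdiff_reflect[OF v]] f
  show ?thesis by simp
qed

lemma convex_increment_between:
  fixes g g' :: "real \<Rightarrow> real"
  assumes cv: "convex_on UNIV g" and d: "\<And>x. (g has_real_derivative g' x) (at x)"
    and "a \<le> u" "u \<le> b" and r: "r \<in> {-1, 1}"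
  shows "\<exists>c\<in>{a, b}. r * (g (u + h) - g u) \<le> r * (g (c + h) - g c)"
proof -
  have up: "g (s + h) - g s \<le> g (t + h) - g t" if "s \<le> t" "0 \<le> h" for s t
    using convex_increment_mono[OF cv d that(2,1)] .
  have down: "g (t + h) - g t \<le> g (s + h) - g s" if "s \<le> t" "h \<le> 0" for s t
    using convex_increment_mono[OF cv d, of "- h" "s + h" "t + h"] that by simp
  consider "r = 1" "0 \<le> h" | "r = 1" "h \<le> 0" | "r = -1" "0 \<le> h" | "r = -1" "h \<le> 0"
    using r by fastforce
  then show ?thesis
  proof cases
    case 1
    then show ?thesis using up[OF \<open>u \<le> b\<close>] by (intro bexI[of _ b]) simp_all
  next
    case 2
    then show ?thesis using down[OF \<open>a \<le> u\<close>] by (intro bexI[of _ a]) simp_all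
  next
    case 3
    then show ?thesis using up[OF \<open>a \<le> u\<close>] by (intro bexI[of _ a]) simp_all
  next
    case 4
    then show ?thesis using down[OF \<open>u \<le> b\<close>] by (intro bexI[of _ b]) simp_all
  qed
qed

lemma standing_phi_continuous:
  assumes "standing_phi \<phi>"
  shows "continuous_on UNIV \<phi>"
  using assms unfolding standing_phi_def
  by (auto intro!: continuous_at_imp_continuous_on differentiable_imp_continuous_within)

lemma standing_phi_conj_deriv:
  assumes "standing_phi \<phi>"
  shows "mono (deriv (conj_fun \<phi>))" and "\<And>a. deriv (conj_fun \<phi>) (deriv \<phi> a) = a"
    and "continuous_on UNIV (deriv (conj_fun \<phi>))"
proof -
  let ?D = "deriv (conj_fun \<phi>)"
  have cv: "convex_on UNIV \<phi>" and sc: "strictly_convex \<phi>" and cvc: "convex_on UNIV (conj_fun \<phi>)"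
    and dif: "\<And>x. \<phi> differentiable at x" and difc: "\<And>x. conj_fun \<phi> differentiable at x"
    using assms unfolding standing_phi_def by auto
  have d: "\<And>x. (\<phi> has_real_derivative deriv \<phi> x) (at x)"
    and dc: "\<And>x. (conj_fun \<phi> has_real_derivative ?D x) (at x)"
    using dif difc by (simp_all add: DERIV_deriv_iff_real_differentiable)
  show "mono ?D"
    using convex_deriv_mono[OF cvc dc] .
  have "inj (deriv \<phi>)"
    using strict_mono_imp_inj_on[OF strictly_convex_deriv_strict_mono[OF cv d sc]] .
  then show inverse: "?D (deriv \<phi> a) = a" for a
    using assms unfolding standing_phi_def by simp
  have "range ?D = UNIV"
    using inverse by (metis surj_def)
  then show "continuous_on UNIV ?D"
    using \<open>mono ?D\<close> by (intro continuous_onI_mono) (auto simp: monoD)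
qed

lemma frechet_subdiff_Max_shifted_support:
  fixes \<phi> \<phi>' D :: "real \<Rightarrow> real" and y \<beta> :: "'i \<Rightarrow> real"
  assumes cv: "convex_on UNIV \<phi>" and d: "\<And>x. (\<phi> has_real_derivative \<phi>' x) (at x)"
    and "mono D" and D_inverse: "\<And>a. D (\<phi>' a) = a" and r: "r \<in> {-1, 1}"
    and fin: "finite I" "I \<noteq> {}"
    and f: "\<And>x. f x = Max ((\<lambda>i. r * \<phi> (x - y i) - \<beta> i) ` I)"
    and v: "v \<in> frechet_subdiff f x"
  shows "f x + r * (\<phi> (z - x + D (r * v)) - \<phi> (D (r * v))) \<le> f z"
proof -
  define p where "p i t = r * \<phi> (t - y i) - \<beta> i" for i t
  define u where "u = D (r * v)"
  have dp: "(p i has_real_derivative r * \<phi>' (t - y i)) (at t)" for i t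
    using DERIV_chain2[OF d DERIV_diff[OF DERIV_ident DERIV_const]] unfolding p_def
    by (auto intro!: derivative_eq_intros)
  have fp: "f t = Max ((\<lambda>i. p i t) ` I)" for t
    using f unfolding p_def .
  obtain i where i: "i \<in> I" "p i x = f x" "v \<le> r * \<phi>' (x - y i)"
    using frechet_subdiff_Max_le_active_deriv[OF fin dp fp v] by blast
  obtain j where j: "j \<in> I" "p j x = f x" "r * \<phi>' (x - y j) \<le> v"
    using frechet_subdiff_Max_ge_active_deriv[OF fin dp fp v] by blast
  \<comment> \<open>As \<open>D\<close> inverts the increasing \<open>\<phi>'\<close>, the active shifts \<open>x - y i\<close>, \<open>x - y j\<close> bracket \<open>u\<close>.\<close>
  obtain k l where kl: "k \<in> {i, j}" "l \<in> {i, j}" "\<phi>' (x - y k) \<le> r * v" "r * v \<le> \<phi>' (x - y l)"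
  proof (cases "r = 1")
    case True
    with i(3) j(3) that[of j i] show ?thesis by simp
  next
    case False
    with r i(3) j(3) that[of i j] show ?thesis by simp
  qed
  have "x - y k \<le> u"
    using monoD[OF \<open>mono D\<close> kl(3)] unfolding u_def D_inverse .
  moreover have "u \<le> x - y l"
    using monoD[OF \<open>mono D\<close> kl(4)] unfolding u_def D_inverse .
  ultimately
  obtain m where m: "m \<in> {i, j}"
    and incr: "r * (\<phi> (u + (z - x)) - \<phi> u) \<le> r * (\<phi> (x - y m + (z - x)) - \<phi> (x - y m))"
    using convex_increment_between[OF cv d _ _ r, of "x - y k" u "x - y l" "z - x"] kl(1,2) by blast
  have "p m z \<le> f z"
    using Max_ge[of "(\<lambda>i. p i z) ` I"] fin m i(1) j(1) fp[of z] by auto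
  moreover have "p m x = f x"
    using m i(2) j(2) by auto
  ultimately show ?thesis
    using incr unfolding u_def[symmetric] p_def by (simp add: algebra_simps)
qed

lemma lim_subdiff_le_of_frechet_subdiff_le:
  fixes G :: "real \<Rightarrow> real \<Rightarrow> real"
  assumes frechet: "\<And>x v. v \<in> frechet_subdiff f x \<Longrightarrow> f x + G x v \<le> c"
    and G: "continuous_on UNIV (\<lambda>p. G (fst p) (snd p))" and v: "v \<in> lim_subdiff f x"
  shows "f x + G x v \<le> c"
proof -
  obtain xs vs where xs: "xs \<longlonglongrightarrow> x" and fxs: "(\<lambda>k. f (xs k)) \<longlonglongrightarrow> f x"
    and vs: "vs \<longlonglongrightarrow> v" and sub: "\<And>k. vs k \<in> frechet_subdiff f (xs k)"
    using v unfolding lim_subdiff_def by blast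
  have "(\<lambda>k. G (xs k) (vs k)) \<longlonglongrightarrow> G x v"
    using continuous_on_tendsto_compose[OF G tendsto_Pair[OF xs vs]] by simp
  with fxs have "(\<lambda>k. f (xs k) + G (xs k) (vs k)) \<longlonglongrightarrow> f x + G x v"
    by (rule tendsto_add)
  then show ?thesis
    by (rule LIMSEQ_le_const2) (use frechet[OF sub] in blast)
qed

lemma lim_subdiff_Max_shifted_support:
  fixes \<phi> :: "real \<Rightarrow> real" and y \<beta> :: "'i \<Rightarrow> real"
  assumes phi: "standing_phi \<phi>" and r: "r \<in> {-1, 1}" and fin: "finite I" "I \<noteq> {}"
    and f: "\<And>x. f x = Max ((\<lambda>i. r * \<phi> (x - y i) - \<beta> i) ` I)"
    and v: "v \<in> lim_subdiff f x"
  defines "D \<equiv> deriv (conj_fun \<phi>)"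
  shows "f x + r * (\<phi> (z - x + D (r * v)) - \<phi> (D (r * v))) \<le> f z"
proof (rule lim_subdiff_le_of_frechet_subdiff_le
    [where G = "\<lambda>x v. r * (\<phi> (z - x + D (r * v)) - \<phi> (D (r * v)))", OF _ _ v])
  have cv: "convex_on UNIV \<phi>" and d: "\<And>x. (\<phi> has_real_derivative deriv \<phi> x) (at x)"
    using phi unfolding standing_phi_def by (auto simp: DERIV_deriv_iff_real_differentiable)
  note D = standing_phi_conj_deriv[OF phi, folded D_def]
  show "f x' + r * (\<phi> (z - x' + D (r * v')) - \<phi> (D (r * v'))) \<le> f z"
    if "v' \<in> frechet_subdiff f x'" for x' v'
    using frechet_subdiff_Max_shifted_support[OF cv d D(1,2) r fin f that] .
  show "continuous_on UNIV (\<lambda>p. r * (\<phi> (z - fst p + D (r * snd p)) - \<phi> (D (r * snd p))))"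
    by (intro continuous_intros continuous_on_compose2[OF standing_phi_continuous[OF phi]]
        continuous_on_compose2[OF D(3)]; simp)
qed

theorem mainTheorem16:
  fixes \<phi> :: "real \<Rightarrow> real" and r :: real and I :: "'i set"
    and y \<beta> :: "'i \<Rightarrow> real" and f :: "real \<Rightarrow> real"
  assumes "standing_phi \<phi>"
    and "r \<in> {-1, 1}"
    and "finite I" and "I \<noteq> {}"
    and "\<And>x. f x = Max ((\<lambda>i. r * \<phi> (x - y i) - \<beta> i) ` I)"
  shows "(r = 1 \<longrightarrow> a_strongly_convex \<phi> f) \<and> (r = -1 \<longrightarrow> a_weakly_convex \<phi> f)"
proof -
  have "lsc f"
    by (rule lsc_Max[OF assms(3,4) _ assms(5)])
      (intro continuous_intros continuous_on_compose2[OF standing_phi_continuous[OF assms(1)]]; simp)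
  note bound = lim_subdiff_Max_shifted_support[OF assms(1-5)]
  have "a_strongly_convex \<phi> f" if "r = 1"
    unfolding a_strongly_convex_def using \<open>lsc f\<close> bound[unfolded that] by (simp add: algebra_simps)
  moreover have "a_weakly_convex \<phi> f" if "r = -1"
    unfolding a_weakly_convex_def using \<open>lsc f\<close> bound[unfolded that] by (simp add: algebra_simps)
  ultimately show ?thesis by blast
qed

end
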